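(* Let $d\ge3$ and let $X,Y\in M_d(\mathbb{C})$ be diagonal matrices such that the pair $(X,Y)$ is generic. Then the matrix $H(X,Y)$ is positive definite, where $H(X,Y)$ is the hermitian matrix of order $2d^2$ given by $H=H_1-\tfrac12(H_2+H_3)+\tfrac14H_4$ with $$H_1=\begin{bmatrix}\|X\|^2&\operatorname{tr}(X^\dagger Y)\\ \operatorname{tr}(Y^\dagger X)&\|Y\|^2\end{bmatrix}\otimes I_{d^2},\qquad H_2=\begin{bmatrix}X^\dagger X&X^\dagger Y\\ Y^\dagger X&Y^\dagger Y\end{bmatrix}\otimes I_d,$$ $$H_3=\begin{bmatrix}I_d\otimes X^*X^T&I_d\otimes X^*Y^T\\ I_d\otimes Y^*X^T&I_d\otimes Y^*Y^T\end{bmatrix},\qquad H_4=\begin{bmatrix}\tilde X^*\tilde X^T&\tilde X^*\tilde Y^T\\ \tilde Y^*\tilde X^T&\tilde Y^*\tilde Y^T\end{bmatrix}.$$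
   Context: A pair $(X,Y)$ of matrices in $M_d(\mathbb{C})$ is generic if $X$ and $Y$ are linearly independent and some linear combination of $X$ and $Y$ is nonsingular. $Z^*$ is the entrywise complex conjugate, $Z^T$ the transpose, $Z^\dagger$ the conjugate transpose, $\|Z\|^2=\operatorname{tr}(Z^\dagger Z)$, $I_m$ the identity matrix of order $m$, and $A\otimes B=[a_{ij}B]$ for $A=[a_{ij}]$. For a matrix $Z$, $\tilde Z$ is the column vector obtained by stacking the columns of $Z$ one below the other, starting with the first. *)

theory Defs
  imports "Jordan_Normal_Form.Determinant"
begin

definition adj_mat :: "complex mat \<Rightarrow> complex mat" where
  "adj_mat Z = transpose_mat (map_mat cnj Z)"

definition conj_mat :: "complex mat \<Rightarrow> complex mat" where
  "conj_mat Z = map_mat cnj Z"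

definition mtrace :: "complex mat \<Rightarrow> complex" where
  "mtrace A = (\<Sum>i<dim_row A. A $$ (i,i))"

definition fro_norm_sq :: "complex mat \<Rightarrow> complex" where
  "fro_norm_sq Z = mtrace (adj_mat Z * Z)"

definition kron :: "complex mat \<Rightarrow> complex mat \<Rightarrow> complex mat" where
  "kron A B = mat (dim_row A * dim_row B) (dim_col A * dim_col B)
     (\<lambda>(i,j). A $$ (i div dim_row B, j div dim_col B) * B $$ (i mod dim_row B, j mod dim_col B))"

(* \<tilde>Z : stack the columns of Z, starting with the first, as a column vector (matrix with one column) *)
definition vec_stack :: "complex mat \<Rightarrow> complex mat" where
  "vec_stack Z = mat (dim_row Z * dim_col Z) 1 (\<lambda>(k,_). Z $$ (k mod dim_row Z, k div dim_row Z))"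

definition generic_pair :: "nat \<Rightarrow> complex mat \<Rightarrow> complex mat \<Rightarrow> bool" where
  "generic_pair d X Y \<longleftrightarrow>
     (\<forall>a b. a \<cdot>\<^sub>m X + b \<cdot>\<^sub>m Y = 0\<^sub>m d d \<longrightarrow> a = 0 \<and> b = 0) \<and>
     (\<exists>a b. det (a \<cdot>\<^sub>m X + b \<cdot>\<^sub>m Y) \<noteq> 0)"

definition H1 :: "nat \<Rightarrow> complex mat \<Rightarrow> complex mat \<Rightarrow> complex mat" where
  "H1 d X Y = kron (mat_of_rows_list 2
      [[fro_norm_sq X, mtrace (adj_mat X * Y)],
       [mtrace (adj_mat Y * X), fro_norm_sq Y]]) (1\<^sub>m (d^2))"

definition H2 :: "nat \<Rightarrow> complex mat \<Rightarrow> complex mat \<Rightarrow> complex mat" where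
  "H2 d X Y = kron (four_block_mat (adj_mat X * X) (adj_mat X * Y)
                                   (adj_mat Y * X) (adj_mat Y * Y)) (1\<^sub>m d)"

definition H3 :: "nat \<Rightarrow> complex mat \<Rightarrow> complex mat \<Rightarrow> complex mat" where
  "H3 d X Y = four_block_mat
      (kron (1\<^sub>m d) (conj_mat X * transpose_mat X)) (kron (1\<^sub>m d) (conj_mat X * transpose_mat Y))
      (kron (1\<^sub>m d) (conj_mat Y * transpose_mat X)) (kron (1\<^sub>m d) (conj_mat Y * transpose_mat Y))"

definition H4 :: "complex mat \<Rightarrow> complex mat \<Rightarrow> complex mat" where
  "H4 X Y = four_block_mat
      (conj_mat (vec_stack X) * transpose_mat (vec_stack X)) (conj_mat (vec_stack X) * transpose_mat (vec_stack Y))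
      (conj_mat (vec_stack Y) * transpose_mat (vec_stack X)) (conj_mat (vec_stack Y) * transpose_mat (vec_stack Y))"

definition Hmat :: "nat \<Rightarrow> complex mat \<Rightarrow> complex mat \<Rightarrow> complex mat" where
  "Hmat d X Y = H1 d X Y - (1/2) \<cdot>\<^sub>m (H2 d X Y + H3 d X Y) + (1/4) \<cdot>\<^sub>m H4 X Y"

definition pos_def_mat :: "nat \<Rightarrow> complex mat \<Rightarrow> bool" where
  "pos_def_mat n H \<longleftrightarrow> H \<in> carrier_mat n n \<and> adj_mat H = H \<and>
     (\<forall>v \<in> carrier_vec n. v \<noteq> 0\<^sub>v n \<longrightarrow> Re (conjugate v \<bullet> (H *\<^sub>v v)) > 0)"

end

theory Submission
  imports Defs
begin

text \<open>
  Split v = (u, w) into two vectors indexed by k < d^2 and let z_k be the diagonal of u_k X + w_k Y.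
  For diagonal X and Y the blocks H_1, H_2, H_3 only couple u_k with w_k, and H_4 has rank one, so
  v^\<dagger> H v = \<Sum>_k (|z_k|^2 - (|z_k(k div d)|^2 + |z_k(k mod d)|^2) / 2) + |\<Sum>_p z_(pd+p)(p)|^2 / 4,
  a sum of nonnegative terms. Suppose it vanishes for v \<noteq> 0. Linear independence of X and Y makes
  some z_k nonzero, which forces k = pd + p with z_k concentrated at p. The vanishing of the last
  term then produces a second such index with p' \<noteq> p. The two coefficient pairs are independent,
  yet both annihilate (X_rr, Y_rr) for any third index r (this is where d \<ge> 3 enters); hence
  X_rr = Y_rr = 0 and every combination aX + bY is singular, contradicting genericity.
\<close>

lemma sum_lessThan_double:
  fixes f :: "nat \<Rightarrow> 'a::comm_monoid_add"
  shows "(\<Sum>i<2*n. f i) = (\<Sum>k<n. f k) + (\<Sum>k<n. f (n + k))"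
proof -
  have "(\<Sum>i<2*n. f i) = sum f {0..<n} + sum f {0+n..<n+n}"
    by (simp add: lessThan_atLeast0 sum.atLeastLessThan_concat mult_2)
  also have "sum f {0+n..<n+n} = (\<Sum>k<n. f (n + k))"
    by (subst sum.shift_bounds_nat_ivl) (simp add: lessThan_atLeast0 add.commute)
  finally show ?thesis by (simp add: lessThan_atLeast0)
qed

lemma sum_nonneg_add_le_0:
  fixes f :: "'a \<Rightarrow> real"
  assumes "finite A" "\<And>k. k \<in> A \<Longrightarrow> f k \<ge> 0" "e \<ge> 0" "\<not> 0 < sum f A + e"
  shows "(\<forall>k\<in>A. f k = 0) \<and> e = 0"
proof -
  have "sum f A \<ge> 0" using assms(2) by (rule sum_nonneg)
  with assms(3,4) have "sum f A = 0" "e = 0" by linarith+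
  with assms(1,2) show ?thesis by (simp add: sum_nonneg_eq_0_iff)
qed

lemma sum_eq_0_imp_other_nonzero:
  fixes t :: "'a \<Rightarrow> 'b::comm_monoid_add"
  assumes "finite A" "sum t A = 0" "a \<in> A" "t a \<noteq> 0"
  obtains b where "b \<in> A" "b \<noteq> a" "t b \<noteq> 0"
proof -
  have "sum t A = t a + sum t (A - {a})"
    using assms(1,3) by (simp add: sum.remove)
  with assms(2,4) have "sum t (A - {a}) \<noteq> 0" by (metis add.comm_neutral)
  then obtain b where "b \<in> A - {a}" "t b \<noteq> 0"
    by (rule sum.not_neutral_contains_not_neutral)
  with that show ?thesis by blast
qed

lemma nonzero_vec_double:
  assumes "v \<in> carrier_vec (2 * n)" "v \<noteq> 0\<^sub>v (2 * n)"
  obtains k where "k < n" "v $ k \<noteq> 0 \<or> v $ (n + k) \<noteq> 0"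
proof -
  obtain i where i: "i < 2 * n" "v $ i \<noteq> 0"
    using assms by (auto simp: vec_eq_iff)
  show ?thesis
  proof (cases "i < n")
    case True
    with i that show ?thesis by blast
  next
    case False
    with i that[of "i - n"] show ?thesis by auto
  qed
qed

lemma cnj_mult_self: "cnj w * w = of_real ((cmod w)\<^sup>2)"
  using complex_norm_square[of w] by (simp add: mult.commute)

definition qform :: "nat \<Rightarrow> (nat \<Rightarrow> nat \<Rightarrow> complex) \<Rightarrow> (nat \<Rightarrow> complex) \<Rightarrow> complex" where
  "qform N h v = (\<Sum>i<N. cnj (v i) * (\<Sum>j<N. h i j * v j))"

lemma conjugate_scalar_prod_mult_mat_vec:
  assumes "A \<in> carrier_mat N N" "v \<in> carrier_vec N"
  shows "conjugate v \<bullet> (A *\<^sub>v v) = qform N (\<lambda>i j. A $$ (i,j)) (\<lambda>i. v $ i)"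
  using assms unfolding qform_def scalar_prod_def
  by (auto simp: lessThan_atLeast0 scalar_prod_def intro!: sum.cong)

lemma qform_cong:
  "(\<And>i j. i < N \<Longrightarrow> j < N \<Longrightarrow> h i j = h' i j) \<Longrightarrow> qform N h v = qform N h' v"
  unfolding qform_def by (intro sum.cong refl arg_cong2[where f = times]) auto

lemma qform_add: "qform N (\<lambda>i j. h i j + h' i j) v = qform N h v + qform N h' v"
  unfolding qform_def by (simp add: distrib_left distrib_right sum.distrib)

lemma qform_diff: "qform N (\<lambda>i j. h i j - h' i j) v = qform N h v - qform N h' v"
  unfolding qform_def by (simp add: right_diff_distrib left_diff_distrib sum_subtractf)

lemma qform_scale: "qform N (\<lambda>i j. c * h i j) v = c * qform N h v"
  unfolding qform_def by (simp add: sum_distrib_left algebra_simps)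

lemma qform_sum:
  "finite R \<Longrightarrow> qform N (\<lambda>i j. \<Sum>r\<in>R. h r i j) v = (\<Sum>r\<in>R. qform N (h r) v)"
  unfolding qform_def
  by (simp add: sum_distrib_left sum_distrib_right sum.swap[of _ R] algebra_simps)

lemma qform_rank_one:
  "qform N (\<lambda>i j. cnj (f i) * f j) v = cnj (\<Sum>j<N. f j * v j) * (\<Sum>j<N. f j * v j)"
  unfolding qform_def by (simp add: sum_distrib_left sum_distrib_right cnj_sum algebra_simps)

lemma qform_block_rank_one:
  "qform (2*n) (\<lambda>i j. if i mod n = j mod n then cnj (c (i div n) (i mod n)) * c (j div n) (i mod n) else 0) v
   = (\<Sum>k<n. cnj (c 0 k * v k + c 1 k * v (n + k)) * (c 0 k * v k + c 1 k * v (n + k)))"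
proof -
  \<comment> \<open>the matrix is the sum over k of the rank-one matrices built from f k, supported on copy k\<close>
  define f where "f k i = (if i mod n = k then c (i div n) k else 0)" for k i
  have "qform (2*n) (\<lambda>i j. if i mod n = j mod n then cnj (c (i div n) (i mod n)) * c (j div n) (i mod n) else 0) v
      = qform (2*n) (\<lambda>i j. \<Sum>k<n. cnj (f k i) * f k j) v"
  proof (rule qform_cong)
    fix i j assume "i < 2*n"
    then have "i mod n < n" by (cases "n = 0") auto
    moreover have "cnj (f k i) * f k j
      = (if k = i mod n then (if i mod n = j mod n then cnj (c (i div n) k) * c (j div n) k else 0) else 0)"
      for k unfolding f_def by simp
    ultimately show "(if i mod n = j mod n then cnj (c (i div n) (i mod n)) * c (j div n) (i mod n) else 0)
      = (\<Sum>k<n. cnj (f k i) * f k j)" by (simp add: sum.delta)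
  qed
  also have "\<dots> = (\<Sum>k<n. cnj (\<Sum>j<2*n. f k j * v j) * (\<Sum>j<2*n. f k j * v j))"
    by (simp add: qform_sum qform_rank_one)
  also have "\<dots> = (\<Sum>k<n. cnj (c 0 k * v k + c 1 k * v (n + k)) * (c 0 k * v k + c 1 k * v (n + k)))"
  proof (rule sum.cong[OF refl])
    fix k assume "k \<in> {..<n}"
    then have "(\<Sum>j<2*n. f k j * v j) = c 0 k * v k + c 1 k * v (n + k)"
      unfolding sum_lessThan_double f_def by (simp add: if_distrib[of "\<lambda>x. x * _"] sum.delta cong: if_cong)
    then show "cnj (\<Sum>j<2*n. f k j * v j) * (\<Sum>j<2*n. f k j * v j)
      = cnj (c 0 k * v k + c 1 k * v (n + k)) * (c 0 k * v k + c 1 k * v (n + k))" by simp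
  qed
  finally show ?thesis .
qed

definition defect :: "nat \<Rightarrow> (nat \<Rightarrow> complex) \<Rightarrow> nat \<Rightarrow> nat \<Rightarrow> real" where
  "defect d z p q = (\<Sum>r<d. (cmod (z r))\<^sup>2) - ((cmod (z p))\<^sup>2 + (cmod (z q))\<^sup>2) / 2"

lemma defect_nonneg:
  assumes "p < d" "q < d"
  shows "defect d z p q \<ge> 0"
proof -
  have "(cmod (z p))\<^sup>2 \<le> (\<Sum>r<d. (cmod (z r))\<^sup>2)" "(cmod (z q))\<^sup>2 \<le> (\<Sum>r<d. (cmod (z r))\<^sup>2)"
    using assms by (auto intro!: member_le_sum)
  then show ?thesis unfolding defect_def by (simp add: field_simps)
qed

lemma defect_pos:
  assumes "p < d" "q < d" "p \<noteq> q" "r < d" "z r \<noteq> 0"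
  shows "defect d z p q > 0"
proof -
  have "(\<Sum>r\<in>{p,q}. (cmod (z r))\<^sup>2) \<le> (\<Sum>r<d. (cmod (z r))\<^sup>2)"
    using assms by (intro sum_mono2) auto
  moreover have "0 < (\<Sum>r<d. (cmod (z r))\<^sup>2)"
    using assms by (intro sum_pos2[of _ r]) auto
  ultimately show ?thesis using assms(3) unfolding defect_def by simp
qed

lemma defect_eq_0_imp_supported:
  assumes "p < d" "defect d z p p = 0" "r < d" "r \<noteq> p"
  shows "z r = 0"
proof -
  have "(\<Sum>r<d. (cmod (z r))\<^sup>2) = (cmod (z p))\<^sup>2 + (\<Sum>r\<in>{..<d}-{p}. (cmod (z r))\<^sup>2)"
    using assms(1) by (subst sum.remove[of _ p]) auto
  with assms(2) have "(\<Sum>r\<in>{..<d}-{p}. (cmod (z r))\<^sup>2) = 0"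
    unfolding defect_def by simp
  with assms(3,4) show ?thesis by (subst (asm) sum_nonneg_eq_0_iff) auto
qed

lemma det2_nonzero_if_separated:
  fixes a b a' b' x y :: complex
  assumes "x * a + y * b \<noteq> 0" "x * a' + y * b' = 0" "a' \<noteq> 0 \<or> b' \<noteq> 0"
  shows "a * b' - a' * b \<noteq> 0"
proof
  assume det: "a * b' - a' * b = 0"
  have "a' * (x * a + y * b) = a * (x * a' + y * b') - y * (a * b' - a' * b)"
    by (simp add: algebra_simps)
  with assms(2) det have "a' = 0" using assms(1) by simp
  have "b' * (x * a + y * b) = b * (x * a' + y * b') + x * (a * b' - a' * b)"
    by (simp add: algebra_simps)
  with assms(2) det have "b' = 0" using assms(1) by simp
  with \<open>a' = 0\<close> assms(3) show False by simp
qed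

lemma annihilator_of_independent_pairs:
  fixes a b a' b' x y :: complex
  assumes "a * b' - a' * b \<noteq> 0" "x * a + y * b = 0" "x * a' + y * b' = 0"
  shows "x = 0 \<and> y = 0"
proof -
  have "x * (a * b' - a' * b) = b' * (x * a + y * b) - b * (x * a' + y * b')"
    by (simp add: algebra_simps)
  with assms have "x * (a * b' - a' * b) = 0" by simp
  moreover have "y * (a * b' - a' * b) = a * (x * a' + y * b') - a' * (x * a + y * b)"
    by (simp add: algebra_simps)
  with assms have "y * (a * b' - a' * b) = 0" by simp
  ultimately show ?thesis using assms(1) by simp
qed

lemma defect_eq_0_imp_concentrated:
  assumes "p < d" "q < d" "defect d z p q = 0" "r0 < d" "z r0 \<noteq> 0"
  shows "q = p" "\<And>r. r < d \<Longrightarrow> r \<noteq> p \<Longrightarrow> z r = 0"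
proof -
  show "q = p"
    using defect_pos[of p d q r0 z] assms by (cases "p = q") auto
  then show "\<And>r. r < d \<Longrightarrow> r \<noteq> p \<Longrightarrow> z r = 0"
    using defect_eq_0_imp_supported[of p d z] assms by blast
qed

lemma common_zero_of_concentrated_combinations:
  fixes x y :: "nat \<Rightarrow> complex" and a b a' b' :: complex
  assumes "d \<ge> 3" "p < d" "q < d" "p \<noteq> q"
    and "x p * a + y p * b \<noteq> 0" "\<And>r. r < d \<Longrightarrow> r \<noteq> p \<Longrightarrow> x r * a + y r * b = 0"
    and "x q * a' + y q * b' \<noteq> 0" "\<And>r. r < d \<Longrightarrow> r \<noteq> q \<Longrightarrow> x r * a' + y r * b' = 0"
  shows "\<exists>r<d. x r = 0 \<and> y r = 0"
proof -
  define r where "r = (if p \<noteq> 0 \<and> q \<noteq> 0 then 0 else if p \<noteq> 1 \<and> q \<noteq> 1 then 1 else 2::nat)"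
  have r: "r < d" "r \<noteq> p" "r \<noteq> q"
    using assms(1,4) unfolding r_def by auto
  have "a' \<noteq> 0 \<or> b' \<noteq> 0" using assms(7) by auto
  with assms(2-6,8) have "a * b' - a' * b \<noteq> 0"
    by (intro det2_nonzero_if_separated[of "x p" _ "y p"]) auto
  moreover have "x r * a + y r * b = 0" "x r * a' + y r * b' = 0"
    using assms(6,8) r by auto
  ultimately have "x r = 0 \<and> y r = 0" by (rule annihilator_of_independent_pairs)
  with r(1) show ?thesis by blast
qed

lemma defect_form_pos:
  fixes x y u w :: "nat \<Rightarrow> complex" and z :: "nat \<Rightarrow> nat \<Rightarrow> complex"
  assumes "d \<ge> 3"
    and nonzero: "\<And>r. r < d \<Longrightarrow> x r \<noteq> 0 \<or> y r \<noteq> 0"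
    and independent: "\<And>a b. a \<noteq> 0 \<or> b \<noteq> 0 \<Longrightarrow> \<exists>r<d. x r * a + y r * b \<noteq> 0"
    and k0: "k0 < d\<^sup>2" "u k0 \<noteq> 0 \<or> w k0 \<noteq> 0"
    and z: "\<And>k r. z k r = x r * u k + y r * w k"
  shows "0 < (\<Sum>k<d\<^sup>2. defect d (z k) (k div d) (k mod d))
             + (cmod (\<Sum>k<d\<^sup>2. if k mod d = k div d then z k (k div d) else 0))\<^sup>2 / 4"
proof (rule ccontr)
  define t where "t k = (if k mod d = k div d then z k (k div d) else 0)" for k
  assume not_pos: "\<not> ?thesis"
  have index: "k div d < d" "k mod d < d" if "k < d\<^sup>2" for k
    using that \<open>d \<ge> 3\<close> by (auto simp: power2_eq_square less_mult_imp_div_less)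
  have "(\<forall>k\<in>{..<d\<^sup>2}. defect d (z k) (k div d) (k mod d) = 0) \<and> (cmod (sum t {..<d\<^sup>2}))\<^sup>2 / 4 = 0"
  proof (rule sum_nonneg_add_le_0)
    show "defect d (z k) (k div d) (k mod d) \<ge> 0" if "k \<in> {..<d\<^sup>2}" for k
      using that by (intro defect_nonneg index) simp_all
    show "\<not> 0 < (\<Sum>k<d\<^sup>2. defect d (z k) (k div d) (k mod d)) + (cmod (sum t {..<d\<^sup>2}))\<^sup>2 / 4"
      using not_pos unfolding t_def .
  qed simp_all
  then have defect_0: "\<And>k. k < d\<^sup>2 \<Longrightarrow> defect d (z k) (k div d) (k mod d) = 0"
    and "sum t {..<d\<^sup>2} = 0" by simp_all
  have concentrated: "k mod d = k div d" "\<And>r. r < d \<Longrightarrow> r \<noteq> k div d \<Longrightarrow> z k r = 0"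
    if "k < d\<^sup>2" "r0 < d" "z k r0 \<noteq> 0" for k r0
    using defect_eq_0_imp_concentrated[OF index[OF that(1)] defect_0[OF that(1)] that(2,3)] by simp_all
  obtain r0 where r0: "r0 < d" "z k0 r0 \<noteq> 0"
    using independent[OF k0(2)] unfolding z by blast
  define p where "p = k0 div d"
  note k0_concentrated = concentrated[OF k0(1) r0]
  have p: "p < d" "\<And>r. r < d \<Longrightarrow> r \<noteq> p \<Longrightarrow> z k0 r = 0"
    using index(1)[OF k0(1)] k0_concentrated(2) unfolding p_def by simp_all
  have "z k0 p \<noteq> 0"
    using r0 p(2)[of r0] by (cases "r0 = p") simp_all
  have "t k0 \<noteq> 0" "k0 = p * d + p"
    using k0_concentrated(1) \<open>z k0 p \<noteq> 0\<close> div_mult_mod_eq[of k0 d]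
    unfolding t_def p_def by simp_all
  \<comment> \<open>the last term vanishes, so a second diagonal index carries a nonzero term\<close>
  obtain k1 where "k1 \<in> {..<d\<^sup>2}" "k1 \<noteq> k0" "t k1 \<noteq> 0"
    using sum_eq_0_imp_other_nonzero[OF finite_lessThan \<open>sum t {..<d\<^sup>2} = 0\<close>] k0(1) \<open>t k0 \<noteq> 0\<close>
    by (metis lessThan_iff)
  then have k1: "k1 < d\<^sup>2" "k1 \<noteq> k0" "t k1 \<noteq> 0" by simp_all
  define q where "q = k1 div d"
  have "k1 mod d = q" "z k1 q \<noteq> 0"
    using k1(3) unfolding t_def q_def by (cases "k1 mod d = k1 div d"; simp)+
  then have q: "q < d" "\<And>r. r < d \<Longrightarrow> r \<noteq> q \<Longrightarrow> z k1 r = 0" "k1 = q * d + q"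
    using k1(1) concentrated(2)[of k1 q] index(1) div_mult_mod_eq[of k1 d] unfolding q_def by simp_all
  have "p \<noteq> q" using k1(2) \<open>k0 = p * d + p\<close> q(3) by auto
  then have "\<exists>r<d. x r = 0 \<and> y r = 0"
  proof (rule common_zero_of_concentrated_combinations[OF \<open>d \<ge> 3\<close> p(1) q(1),
        where a = "u k0" and b = "w k0" and a' = "u k1" and b' = "w k1"])
    show "x p * u k0 + y p * w k0 \<noteq> 0" using \<open>z k0 p \<noteq> 0\<close> unfolding z .
    show "x r * u k0 + y r * w k0 = 0" if "r < d" "r \<noteq> p" for r using p(2)[OF that] unfolding z .
    show "x q * u k1 + y q * w k1 \<noteq> 0" using \<open>z k1 q \<noteq> 0\<close> unfolding z .
    show "x r * u k1 + y r * w k1 = 0" if "r < d" "r \<noteq> q" for r using q(2)[OF that] unfolding z .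
  qed
  with nonzero show False by blast
qed

lemma index_mult_diagonal_mat:
  assumes A: "A \<in> carrier_mat n n" and B: "B \<in> carrier_mat n n"
    and "diagonal_mat A" "diagonal_mat B" and i: "i < n" and j: "j < n"
  shows "(A * B) $$ (i,j) = (if i = j then A $$ (i,i) * B $$ (i,i) else 0)"
proof -
  have "(A * B) $$ (i,j) = (\<Sum>k<n. A $$ (i,k) * B $$ (k,j))"
    using A B i j by (simp add: scalar_prod_def lessThan_atLeast0)
  also have "\<dots> = (\<Sum>k<n. if k = i then A $$ (i,i) * B $$ (i,j) else 0)"
    using assms unfolding diagonal_mat_def by (intro sum.cong) auto
  also have "\<dots> = A $$ (i,i) * B $$ (i,j)" using i by simp
  finally show ?thesis using assms unfolding diagonal_mat_def by auto
qed

lemma adj_mat_carrier_mat: "A \<in> carrier_mat m n \<Longrightarrow> adj_mat A \<in> carrier_mat n m"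
  unfolding adj_mat_def by auto

lemma conj_mat_carrier_mat: "A \<in> carrier_mat m n \<Longrightarrow> conj_mat A \<in> carrier_mat m n"
  unfolding conj_mat_def by auto

lemma index_adj_mat: "i < dim_col A \<Longrightarrow> j < dim_row A \<Longrightarrow> adj_mat A $$ (i,j) = cnj (A $$ (j,i))"
  unfolding adj_mat_def by auto

lemma index_conj_mat: "i < dim_row A \<Longrightarrow> j < dim_col A \<Longrightarrow> conj_mat A $$ (i,j) = cnj (A $$ (i,j))"
  unfolding conj_mat_def by auto

lemma diagonal_mat_adj_mat: "diagonal_mat A \<Longrightarrow> diagonal_mat (adj_mat A)"
  unfolding diagonal_mat_def adj_mat_def by auto

lemma diagonal_mat_conj_mat: "diagonal_mat A \<Longrightarrow> diagonal_mat (conj_mat A)"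
  unfolding diagonal_mat_def conj_mat_def by auto

lemma diagonal_mat_transpose_mat: "diagonal_mat A \<Longrightarrow> diagonal_mat (transpose_mat A)"
  unfolding diagonal_mat_def by auto

lemma index_adj_mat_mult_diagonal:
  assumes "A \<in> carrier_mat n n" "B \<in> carrier_mat n n" "diagonal_mat A" "diagonal_mat B" "i < n" "j < n"
  shows "(adj_mat A * B) $$ (i,j) = (if i = j then cnj (A $$ (i,i)) * B $$ (i,i) else 0)"
  using assms index_mult_diagonal_mat[OF adj_mat_carrier_mat[OF assms(1)] assms(2)
      diagonal_mat_adj_mat[OF assms(3)] assms(4-6)]
  by (simp add: index_adj_mat)

lemma index_conj_mat_mult_transpose_diagonal:
  assumes "A \<in> carrier_mat n n" "B \<in> carrier_mat n n" "diagonal_mat A" "diagonal_mat B" "i < n" "j < n"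
  shows "(conj_mat A * transpose_mat B) $$ (i,j) = (if i = j then cnj (A $$ (i,i)) * B $$ (i,i) else 0)"
  using assms index_mult_diagonal_mat[OF conj_mat_carrier_mat[OF assms(1)] _
      diagonal_mat_conj_mat[OF assms(3)] diagonal_mat_transpose_mat[OF assms(4)] assms(5-6)]
  by (simp add: index_conj_mat)

lemma mtrace_adj_mat_mult_diagonal:
  assumes "A \<in> carrier_mat n n" "B \<in> carrier_mat n n" "diagonal_mat A" "diagonal_mat B"
  shows "mtrace (adj_mat A * B) = (\<Sum>r<n. cnj (A $$ (r,r)) * B $$ (r,r))"
proof -
  have "dim_row (adj_mat A * B) = n" using adj_mat_carrier_mat[OF assms(1)] by simp
  then show ?thesis unfolding mtrace_def
    by (intro sum.cong) (auto simp: index_adj_mat_mult_diagonal[OF assms])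
qed

lemma det_diagonal_mat_eq_0:
  assumes "A \<in> carrier_mat n n" "diagonal_mat A" "r < n" "A $$ (r,r) = 0"
  shows "det A = 0"
proof -
  have "upper_triangular A"
    using assms(1,2) unfolding upper_triangular_def diagonal_mat_def by auto
  then have "det A = prod_list (diag_mat A)"
    using assms(1) by (rule det_upper_triangular)
  also have "\<dots> = 0"
    using assms(1,3,4) by (auto simp: prod_list_diag_prod intro!: prod_zero bexI[of _ r])
  finally show ?thesis .
qed

lemma kron_carrier_mat:
  "A \<in> carrier_mat a b \<Longrightarrow> B \<in> carrier_mat c e \<Longrightarrow> kron A B \<in> carrier_mat (a * c) (b * e)"
  unfolding kron_def by auto

lemma index_kron:
  "i < dim_row A * dim_row B \<Longrightarrow> j < dim_col A * dim_col B \<Longrightarrow>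
   kron A B $$ (i,j) = A $$ (i div dim_row B, j div dim_col B) * B $$ (i mod dim_row B, j mod dim_col B)"
  unfolding kron_def by simp

lemma vec_stack_carrier_mat: "A \<in> carrier_mat m n \<Longrightarrow> vec_stack A \<in> carrier_mat (m * n) 1"
  unfolding vec_stack_def by auto

lemma index_vec_stack_diagonal:
  assumes "A \<in> carrier_mat n n" "diagonal_mat A" "k < n * n"
  shows "vec_stack A $$ (k,0) = (if k mod n = k div n then A $$ (k div n, k div n) else 0)"
proof -
  have "n > 0" using assms(3) by (cases n) auto
  then have "k div n < n" "k mod n < n"
    using assms(3) by (auto simp: less_mult_imp_div_less)
  with assms show ?thesis unfolding vec_stack_def diagonal_mat_def by auto
qed

definition pair_mat :: "complex mat \<Rightarrow> complex mat \<Rightarrow> nat \<Rightarrow> complex mat" where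
  "pair_mat X Y s = (if s = 0 then X else Y)"

lemma pair_mat_carrier_mat:
  "X \<in> carrier_mat m n \<Longrightarrow> Y \<in> carrier_mat m n \<Longrightarrow> pair_mat X Y s \<in> carrier_mat m n"
  by (simp add: pair_mat_def)

lemma diagonal_pair_mat: "diagonal_mat X \<Longrightarrow> diagonal_mat Y \<Longrightarrow> diagonal_mat (pair_mat X Y s)"
  by (simp add: pair_mat_def)

lemma index_four_block_pair_mat:
  assumes carrier: "\<And>s t. F (pair_mat X Y s) (pair_mat X Y t) \<in> carrier_mat n n"
    and "i < 2 * n" "j < 2 * n"
  shows "four_block_mat (F X X) (F X Y) (F Y X) (F Y Y) $$ (i,j)
    = F (pair_mat X Y (i div n)) (pair_mat X Y (j div n)) $$ (i mod n, j mod n)"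
proof -
  have "F X X \<in> carrier_mat n n" "F X Y \<in> carrier_mat n n" "F Y X \<in> carrier_mat n n" "F Y Y \<in> carrier_mat n n"
    using carrier[of 0 0] carrier[of 0 1] carrier[of 1 0] carrier[of 1 1] by (simp_all add: pair_mat_def)
  with assms(2,3) show ?thesis
    by (cases "i < n"; cases "j < n") (auto simp: pair_mat_def le_div_geq le_mod_geq)
qed

lemma mod_sq_div: "(i::nat) mod d\<^sup>2 div d = i div d mod d"
  by (cases "d = 0") (simp_all add: power2_eq_square mod_mult2_eq)

lemma div_sq: "(i::nat) div d\<^sup>2 = i div d div d"
  by (simp add: power2_eq_square div_mult2_eq)

lemma mod_sq_eq_iff:
  "(i::nat) mod d\<^sup>2 = j mod d\<^sup>2 \<longleftrightarrow> i div d mod d = j div d mod d \<and> i mod d = j mod d"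
proof
  assume "i mod d\<^sup>2 = j mod d\<^sup>2"
  then show "i div d mod d = j div d mod d \<and> i mod d = j mod d"
    by (metis mod_sq_div mod_mod_cancel dvd_power[of 2 d] zero_less_numeral)
next
  assume "i div d mod d = j div d mod d \<and> i mod d = j mod d"
  then show "i mod d\<^sup>2 = j mod d\<^sup>2" by (simp add: power2_eq_square mod_mult2_eq)
qed

text \<open>The vector z_k of the proof idea.\<close>

definition comb_diag :: "nat \<Rightarrow> complex mat \<Rightarrow> complex mat \<Rightarrow> complex vec \<Rightarrow> nat \<Rightarrow> nat \<Rightarrow> complex" where
  "comb_diag d X Y v k r = X $$ (r,r) * v $ k + Y $$ (r,r) * v $ (d\<^sup>2 + k)"

definition diag_trace :: "nat \<Rightarrow> complex mat \<Rightarrow> complex mat \<Rightarrow> complex vec \<Rightarrow> complex" where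
  "diag_trace d X Y v = (\<Sum>k<d\<^sup>2. if k mod d = k div d then comb_diag d X Y v k (k div d) else 0)"

lemma comb_diag_pair_mat:
  "comb_diag d X Y v k r = pair_mat X Y 0 $$ (r,r) * v $ k + pair_mat X Y 1 $$ (r,r) * v $ (d\<^sup>2 + k)"
  unfolding comb_diag_def pair_mat_def by simp

context
  fixes d :: nat and X Y :: "complex mat"
  assumes X: "X \<in> carrier_mat d d" and Y: "Y \<in> carrier_mat d d"
    and diag_X: "diagonal_mat X" and diag_Y: "diagonal_mat Y" and d_pos: "d > 0"
begin

lemma pair_carrier: "pair_mat X Y s \<in> carrier_mat d d"
  using X Y by (rule pair_mat_carrier_mat)

lemma pair_diagonal: "diagonal_mat (pair_mat X Y s)"
  using diag_X diag_Y by (rule diagonal_pair_mat)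

lemma block_index_lt:
  assumes "i < 2 * d\<^sup>2"
  shows "i div d\<^sup>2 < 2" "i div d < 2 * d" "i mod d\<^sup>2 < d * d"
  using assms d_pos by (auto simp: power2_eq_square mult.assoc intro: less_mult_imp_div_less)

lemma index_H1:
  assumes i: "i < 2 * d\<^sup>2" and j: "j < 2 * d\<^sup>2"
  shows "H1 d X Y $$ (i,j) = (if i mod d\<^sup>2 = j mod d\<^sup>2 then
    (\<Sum>r<d. cnj (pair_mat X Y (i div d\<^sup>2) $$ (r,r)) * pair_mat X Y (j div d\<^sup>2) $$ (r,r)) else 0)"
proof -
  let ?M = "[[fro_norm_sq X, mtrace (adj_mat X * Y)], [mtrace (adj_mat Y * X), fro_norm_sq Y]]"
  have M: "?M ! s ! t = mtrace (adj_mat (pair_mat X Y s) * pair_mat X Y t)" if "s < 2" "t < 2" for s t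
    using that by (auto simp: less_2_cases_iff pair_mat_def fro_norm_sq_def)
  have "H1 d X Y $$ (i,j) = ?M ! (i div d\<^sup>2) ! (j div d\<^sup>2) * (if i mod d\<^sup>2 = j mod d\<^sup>2 then 1 else 0)"
    unfolding H1_def kron_def mat_of_rows_list_def using i j d_pos block_index_lt(1)[OF i] block_index_lt(1)[OF j] by simp
  then show ?thesis
    using M[OF block_index_lt(1)[OF i] block_index_lt(1)[OF j]]
    by (simp add: mtrace_adj_mat_mult_diagonal[OF pair_carrier pair_carrier pair_diagonal pair_diagonal])
qed

lemma index_H2:
  assumes i: "i < 2 * d\<^sup>2" and j: "j < 2 * d\<^sup>2"
  shows "H2 d X Y $$ (i,j) = (if i mod d\<^sup>2 = j mod d\<^sup>2 then
    cnj (pair_mat X Y (i div d\<^sup>2) $$ (i mod d\<^sup>2 div d, i mod d\<^sup>2 div d))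
      * pair_mat X Y (j div d\<^sup>2) $$ (i mod d\<^sup>2 div d, i mod d\<^sup>2 div d) else 0)"
proof -
  have blocks: "adj_mat (pair_mat X Y s) * pair_mat X Y t \<in> carrier_mat d d" for s t
    using adj_mat_carrier_mat[OF pair_carrier] pair_carrier by (rule mult_carrier_mat)
  let ?B = "four_block_mat (adj_mat X * X) (adj_mat X * Y) (adj_mat Y * X) (adj_mat Y * Y)"
  have "?B \<in> carrier_mat (d + d) (d + d)"
    using four_block_carrier_mat[OF blocks[of 0 0] blocks[of 1 1]] by (simp add: pair_mat_def)
  then have "H2 d X Y $$ (i,j) = ?B $$ (i div d, j div d) * (if i mod d = j mod d then 1 else 0)"
    unfolding H2_def using i j d_pos
    by (subst index_kron) (auto simp: power2_eq_square mult_2 distrib_right simp del: index_mat_four_block)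
  also have "\<dots> = (adj_mat (pair_mat X Y (i div d div d)) * pair_mat X Y (j div d div d))
      $$ (i div d mod d, j div d mod d) * (if i mod d = j mod d then 1 else 0)"
    using index_four_block_pair_mat[where F = "\<lambda>A B. adj_mat A * B", OF blocks
        block_index_lt(2)[OF i] block_index_lt(2)[OF j]] by simp
  finally show ?thesis
    unfolding mod_sq_div mod_sq_eq_iff div_sq using d_pos
    by (simp add: index_adj_mat_mult_diagonal[OF pair_carrier pair_carrier pair_diagonal pair_diagonal])
qed

lemma index_H3:
  assumes i: "i < 2 * d\<^sup>2" and j: "j < 2 * d\<^sup>2"
  shows "H3 d X Y $$ (i,j) = (if i mod d\<^sup>2 = j mod d\<^sup>2 then
    cnj (pair_mat X Y (i div d\<^sup>2) $$ (i mod d, i mod d)) * pair_mat X Y (j div d\<^sup>2) $$ (i mod d, i mod d) else 0)"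
proof -
  have products: "conj_mat (pair_mat X Y s) * transpose_mat (pair_mat X Y t) \<in> carrier_mat d d" for s t
    using conj_mat_carrier_mat[OF pair_carrier] transpose_carrier_mat[THEN iffD2, OF pair_carrier]
    by (rule mult_carrier_mat)
  have blocks: "kron (1\<^sub>m d) (conj_mat (pair_mat X Y s) * transpose_mat (pair_mat X Y t)) \<in> carrier_mat (d\<^sup>2) (d\<^sup>2)" for s t
    using kron_carrier_mat[OF one_carrier_mat products] by (simp add: power2_eq_square)
  have "H3 d X Y $$ (i,j) = kron (1\<^sub>m d) (conj_mat (pair_mat X Y (i div d\<^sup>2)) * transpose_mat (pair_mat X Y (j div d\<^sup>2)))
      $$ (i mod d\<^sup>2, j mod d\<^sup>2)"
    unfolding H3_def
    using index_four_block_pair_mat[where F = "\<lambda>A B. kron (1\<^sub>m d) (conj_mat A * transpose_mat B)", OF blocks i j]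
    by simp
  also have "\<dots> = (if i mod d\<^sup>2 div d = j mod d\<^sup>2 div d then 1 else 0)
      * (conj_mat (pair_mat X Y (i div d\<^sup>2)) * transpose_mat (pair_mat X Y (j div d\<^sup>2))) $$ (i mod d, j mod d)"
    using products[of "i div d\<^sup>2" "j div d\<^sup>2"] block_index_lt(3)[OF i] block_index_lt(3)[OF j] d_pos
      conj_mat_carrier_mat[OF pair_carrier, of "i div d\<^sup>2"] pair_carrier[of "j div d\<^sup>2"]
    by (subst index_kron) (auto simp: less_mult_imp_div_less power2_eq_square mod_mod_cancel)
  finally show ?thesis
    using d_pos by (auto simp: index_conj_mat_mult_transpose_diagonal[OF pair_carrier pair_carrier pair_diagonal pair_diagonal]
        mod_sq_div mod_sq_eq_iff)
qed

lemma index_H4: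
  assumes i: "i < 2 * d\<^sup>2" and j: "j < 2 * d\<^sup>2"
  shows "H4 X Y $$ (i,j) = cnj (vec_stack (pair_mat X Y (i div d\<^sup>2)) $$ (i mod d\<^sup>2, 0))
    * vec_stack (pair_mat X Y (j div d\<^sup>2)) $$ (j mod d\<^sup>2, 0)"
proof -
  have stacks: "vec_stack (pair_mat X Y s) \<in> carrier_mat (d\<^sup>2) 1" for s
    using vec_stack_carrier_mat[OF pair_carrier] by (simp add: power2_eq_square)
  have blocks: "conj_mat (vec_stack (pair_mat X Y s)) * transpose_mat (vec_stack (pair_mat X Y t)) \<in> carrier_mat (d\<^sup>2) (d\<^sup>2)" for s t
    using conj_mat_carrier_mat[OF stacks] transpose_carrier_mat[THEN iffD2, OF stacks] by (rule mult_carrier_mat)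
  have "H4 X Y $$ (i,j) = (conj_mat (vec_stack (pair_mat X Y (i div d\<^sup>2)))
      * transpose_mat (vec_stack (pair_mat X Y (j div d\<^sup>2)))) $$ (i mod d\<^sup>2, j mod d\<^sup>2)"
    unfolding H4_def
    using index_four_block_pair_mat[where F = "\<lambda>A B. conj_mat (vec_stack A) * transpose_mat (vec_stack B)", OF blocks i j]
    by simp
  then show ?thesis
    using stacks[of "i div d\<^sup>2"] stacks[of "j div d\<^sup>2"] block_index_lt(3)[OF i] block_index_lt(3)[OF j]
    unfolding conj_mat_def by (simp add: scalar_prod_def power2_eq_square)
qed

lemma H_carrier:
  "H1 d X Y \<in> carrier_mat (2 * d\<^sup>2) (2 * d\<^sup>2)" "H2 d X Y \<in> carrier_mat (2 * d\<^sup>2) (2 * d\<^sup>2)"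
  "H3 d X Y \<in> carrier_mat (2 * d\<^sup>2) (2 * d\<^sup>2)" "H4 X Y \<in> carrier_mat (2 * d\<^sup>2) (2 * d\<^sup>2)"
  unfolding H1_def H2_def H3_def H4_def kron_def vec_stack_def conj_mat_def adj_mat_def
  using X Y by (auto simp: mat_of_rows_list_def power2_eq_square)

lemma Hmat_carrier: "Hmat d X Y \<in> carrier_mat (2 * d\<^sup>2) (2 * d\<^sup>2)"
  using H_carrier unfolding Hmat_def by simp

lemma index_Hmat:
  "i < 2 * d\<^sup>2 \<Longrightarrow> j < 2 * d\<^sup>2 \<Longrightarrow> Hmat d X Y $$ (i,j)
    = H1 d X Y $$ (i,j) - 1/2 * (H2 d X Y $$ (i,j) + H3 d X Y $$ (i,j)) + 1/4 * H4 X Y $$ (i,j)"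
  using H_carrier unfolding Hmat_def by simp

lemma adj_Hmat: "adj_mat (Hmat d X Y) = Hmat d X Y"
proof (rule eq_matI)
  fix i j assume "i < dim_row (Hmat d X Y)" "j < dim_col (Hmat d X Y)"
  then have i: "i < 2 * d\<^sup>2" and j: "j < 2 * d\<^sup>2" using Hmat_carrier by auto
  have "i mod d = j mod d" if "i mod d\<^sup>2 = j mod d\<^sup>2"
    using that mod_sq_eq_iff by blast
  then show "adj_mat (Hmat d X Y) $$ (i,j) = Hmat d X Y $$ (i,j)"
    using i j Hmat_carrier
    by (auto simp: index_adj_mat index_Hmat index_H1 index_H2 index_H3 index_H4 mod_sq_div mult.commute)
qed (use Hmat_carrier in \<open>auto simp: adj_mat_def\<close>)

lemma qform_H1: "qform (2 * d\<^sup>2) (\<lambda>i j. H1 d X Y $$ (i,j)) (\<lambda>i. v $ i)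
  = (\<Sum>k<d\<^sup>2. \<Sum>r<d. cnj (comb_diag d X Y v k r) * comb_diag d X Y v k r)"
proof -
  have "qform (2 * d\<^sup>2) (\<lambda>i j. H1 d X Y $$ (i,j)) (\<lambda>i. v $ i)
    = qform (2 * d\<^sup>2) (\<lambda>i j. \<Sum>r<d. if i mod d\<^sup>2 = j mod d\<^sup>2 then
        cnj (pair_mat X Y (i div d\<^sup>2) $$ (r,r)) * pair_mat X Y (j div d\<^sup>2) $$ (r,r) else 0) (\<lambda>i. v $ i)"
    by (rule qform_cong) (simp add: index_H1)
  also have "\<dots> = (\<Sum>r<d. \<Sum>k<d\<^sup>2. cnj (comb_diag d X Y v k r) * comb_diag d X Y v k r)"
    unfolding qform_sum[OF finite_lessThan] comb_diag_pair_mat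
    by (intro sum.cong refl qform_block_rank_one[where c = "\<lambda>s k. pair_mat X Y s $$ (_, _)"])
  finally show ?thesis by (rule trans) (rule sum.swap)
qed

lemma qform_H2: "qform (2 * d\<^sup>2) (\<lambda>i j. H2 d X Y $$ (i,j)) (\<lambda>i. v $ i)
  = (\<Sum>k<d\<^sup>2. cnj (comb_diag d X Y v k (k div d)) * comb_diag d X Y v k (k div d))"
proof -
  have "qform (2 * d\<^sup>2) (\<lambda>i j. H2 d X Y $$ (i,j)) (\<lambda>i. v $ i)
    = qform (2 * d\<^sup>2) (\<lambda>i j. if i mod d\<^sup>2 = j mod d\<^sup>2 then
        cnj (pair_mat X Y (i div d\<^sup>2) $$ (i mod d\<^sup>2 div d, i mod d\<^sup>2 div d))
        * pair_mat X Y (j div d\<^sup>2) $$ (i mod d\<^sup>2 div d, i mod d\<^sup>2 div d) else 0) (\<lambda>i. v $ i)"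
    by (rule qform_cong) (simp add: index_H2)
  then show ?thesis
    by (simp add: qform_block_rank_one[where c = "\<lambda>s k. pair_mat X Y s $$ (k div d, k div d)"] comb_diag_pair_mat)
qed

lemma qform_H3: "qform (2 * d\<^sup>2) (\<lambda>i j. H3 d X Y $$ (i,j)) (\<lambda>i. v $ i)
  = (\<Sum>k<d\<^sup>2. cnj (comb_diag d X Y v k (k mod d)) * comb_diag d X Y v k (k mod d))"
proof -
  have "qform (2 * d\<^sup>2) (\<lambda>i j. H3 d X Y $$ (i,j)) (\<lambda>i. v $ i)
    = qform (2 * d\<^sup>2) (\<lambda>i j. if i mod d\<^sup>2 = j mod d\<^sup>2 then
        cnj (pair_mat X Y (i div d\<^sup>2) $$ (i mod d\<^sup>2 mod d, i mod d\<^sup>2 mod d))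
        * pair_mat X Y (j div d\<^sup>2) $$ (i mod d\<^sup>2 mod d, i mod d\<^sup>2 mod d) else 0) (\<lambda>i. v $ i)"
    by (rule qform_cong) (auto simp: index_H3 mod_mod_cancel mod_sq_eq_iff)
  then show ?thesis
    by (simp add: qform_block_rank_one[where c = "\<lambda>s k. pair_mat X Y s $$ (k mod d, k mod d)"] comb_diag_pair_mat)
qed

lemma qform_H4: "qform (2 * d\<^sup>2) (\<lambda>i j. H4 X Y $$ (i,j)) (\<lambda>i. v $ i) = cnj (diag_trace d X Y v) * diag_trace d X Y v"
proof -
  let ?w = "\<lambda>i. vec_stack (pair_mat X Y (i div d\<^sup>2)) $$ (i mod d\<^sup>2, 0)"
  have "(\<Sum>j<2 * d\<^sup>2. ?w j * v $ j) = diag_trace d X Y v"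
    unfolding sum_lessThan_double sum.distrib[symmetric] diag_trace_def using d_pos
    by (intro sum.cong refl)
      (simp add: index_vec_stack_diagonal[OF pair_carrier pair_diagonal] comb_diag_pair_mat power2_eq_square)
  moreover have "qform (2 * d\<^sup>2) (\<lambda>i j. H4 X Y $$ (i,j)) (\<lambda>i. v $ i)
    = qform (2 * d\<^sup>2) (\<lambda>i j. cnj (?w i) * ?w j) (\<lambda>i. v $ i)"
    by (rule qform_cong) (simp add: index_H4)
  ultimately show ?thesis by (simp add: qform_rank_one)
qed

lemma quadratic_form_Hmat:
  assumes v: "v \<in> carrier_vec (2 * d\<^sup>2)"
  shows "Re (conjugate v \<bullet> (Hmat d X Y *\<^sub>v v))
    = (\<Sum>k<d\<^sup>2. defect d (comb_diag d X Y v k) (k div d) (k mod d)) + (cmod (diag_trace d X Y v))\<^sup>2 / 4"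
proof -
  let ?q = "\<lambda>H. qform (2 * d\<^sup>2) (\<lambda>i j. H $$ (i,j)) (\<lambda>i. v $ i)" and ?z = "comb_diag d X Y v"
  have "conjugate v \<bullet> (Hmat d X Y *\<^sub>v v) = qform (2 * d\<^sup>2) (\<lambda>i j. H1 d X Y $$ (i,j)
      - 1/2 * (H2 d X Y $$ (i,j) + H3 d X Y $$ (i,j)) + 1/4 * H4 X Y $$ (i,j)) (\<lambda>i. v $ i)"
    unfolding conjugate_scalar_prod_mult_mat_vec[OF Hmat_carrier v] by (intro qform_cong index_Hmat)
  also have "\<dots> = ?q (H1 d X Y) - 1/2 * (?q (H2 d X Y) + ?q (H3 d X Y)) + 1/4 * ?q (H4 X Y)"
    by (simp only: qform_add qform_diff qform_scale)
  also have "\<dots> = of_real ((\<Sum>k<d\<^sup>2. \<Sum>r<d. (cmod (?z k r))\<^sup>2)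
      - ((\<Sum>k<d\<^sup>2. (cmod (?z k (k div d)))\<^sup>2) + (\<Sum>k<d\<^sup>2. (cmod (?z k (k mod d)))\<^sup>2)) / 2
      + (cmod (diag_trace d X Y v))\<^sup>2 / 4)"
    unfolding qform_H1 qform_H2 qform_H3 qform_H4 cnj_mult_self by simp
  also have "(\<Sum>k<d\<^sup>2. \<Sum>r<d. (cmod (?z k r))\<^sup>2)
      - ((\<Sum>k<d\<^sup>2. (cmod (?z k (k div d)))\<^sup>2) + (\<Sum>k<d\<^sup>2. (cmod (?z k (k mod d)))\<^sup>2)) / 2
      = (\<Sum>k<d\<^sup>2. defect d (?z k) (k div d) (k mod d))"
    unfolding defect_def by (simp add: sum_subtractf sum.distrib flip: sum_divide_distrib)
  finally show ?thesis by simp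
qed

lemma generic_pair_diagonal_nonzero:
  assumes "generic_pair d X Y" "r < d"
  shows "X $$ (r,r) \<noteq> 0 \<or> Y $$ (r,r) \<noteq> 0"
proof (rule ccontr)
  assume zero: "\<not> ?thesis"
  obtain a b where "det (a \<cdot>\<^sub>m X + b \<cdot>\<^sub>m Y) \<noteq> 0"
    using assms(1) unfolding generic_pair_def by blast
  moreover have "diagonal_mat (a \<cdot>\<^sub>m X + b \<cdot>\<^sub>m Y)"
    using X Y diag_X diag_Y unfolding diagonal_mat_def by auto
  then have "det (a \<cdot>\<^sub>m X + b \<cdot>\<^sub>m Y) = 0"
    using X Y assms(2) zero by (intro det_diagonal_mat_eq_0[of _ d r]) auto
  ultimately show False by contradiction
qed

lemma generic_pair_diagonal_independent:
  assumes "generic_pair d X Y" "a \<noteq> 0 \<or> b \<noteq> 0"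
  shows "\<exists>r<d. X $$ (r,r) * a + Y $$ (r,r) * b \<noteq> 0"
proof (rule ccontr)
  assume "\<not> ?thesis"
  then have "(a \<cdot>\<^sub>m X + b \<cdot>\<^sub>m Y) $$ (i,j) = 0" if "i < d" "j < d" for i j
    using that X Y diag_X diag_Y unfolding diagonal_mat_def by (cases "i = j") (auto simp: mult.commute)
  then have "a \<cdot>\<^sub>m X + b \<cdot>\<^sub>m Y = 0\<^sub>m d d"
    using X Y by (intro eq_matI) auto
  with assms show False unfolding generic_pair_def by blast
qed

end

theorem theorem5p1:
  fixes d :: nat and X Y :: "complex mat"
  assumes "d \<ge> 3"
    and "X \<in> carrier_mat d d" and "Y \<in> carrier_mat d d"
    and "diagonal_mat X" and "diagonal_mat Y"
    and "generic_pair d X Y"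
  shows "pos_def_mat (2 * d^2) (Hmat d X Y)"
proof -
  have "d > 0" using assms(1) by simp
  note diagonal = assms(2-5) \<open>d > 0\<close>
  have "0 < Re (conjugate v \<bullet> (Hmat d X Y *\<^sub>v v))"
    if v: "v \<in> carrier_vec (2 * d\<^sup>2)" "v \<noteq> 0\<^sub>v (2 * d\<^sup>2)" for v
  proof -
    obtain k where "k < d\<^sup>2" "v $ k \<noteq> 0 \<or> v $ (d\<^sup>2 + k) \<noteq> 0"
      using nonzero_vec_double[OF v] .
    with assms(1) generic_pair_diagonal_nonzero[OF diagonal assms(6)]
      generic_pair_diagonal_independent[OF diagonal assms(6)]
    show ?thesis unfolding quadratic_form_Hmat[OF diagonal v(1)] diag_trace_def
      by (rule defect_form_pos[where u = "\<lambda>k. v $ k" and w = "\<lambda>k. v $ (d\<^sup>2 + k)"])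
        (simp_all add: comb_diag_def)
  qed
  then show ?thesis
    unfolding pos_def_mat_def using Hmat_carrier[OF diagonal] adj_Hmat[OF diagonal] by blast
qed

end
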